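(* Let $D^l$ and $D^r$ be two upright long knot diagrams (possibly with null vertices) which coincide outside a disk and differ inside it by the following R3b move. Inside the disk there are three upward-pointing strands, with edge labels (in order along the knot) $i, i^+, i^{++}$ on the first, $j,j^+,j^{++}$ on the second and $k,k^+,k^{++}$ on the third, the edges $i^+,j^+,k^+$ lying entirely inside the disk. In $D^l$ the crossings inside the disk are $(1,j,k)$, $(1,i,k^+)$, $(1,i^+,j^+)$; in $D^r$ they are $(1,i,j)$, $(1,i^+,k)$, $(1,j^+,k^+)$. All other crossings, and all rotation numbers, are the same in both diagrams, the inner edges $i^+,j^+,k^+$ having rotation number $0$. Then $\theta_0(D^l)=\theta_0(D^r)$.
   Context: An upright long knot diagram is a planar diagram of a long oriented knot such that at every crossing both strands point upward and the knot points upward at its beginning and end. It may contain null vertices (marked points on the knot, away from crossings, where the tangent points upward, whose only role is to cut edges). Edges are the arcs obtained by cutting the knot at all crossings (both strands) and null vertices; they carry distinct labels, $\ell^+$ denotes the label of the edge following $\ell$. Each edge $k$ has a rotation number $\varphi_k$: the signed number of points where its tangent is horizontal and heading right, cups $+1$, caps $-1$. A crossing is $c=(s,i,j)$: sign $s=\pm1$, incoming over-edge $i$, incoming under-edge $j$ (outgoing edges $i^+$, $j^+$); $X$ is the set of crossings. A null vertex with incoming edge $j$ and outgoing edge $k$ is recorded as $(j,k)$. Let $A=I+\sum_cA_c+\sum_{\mathrm{nv}}A_{\mathrm{nv}}$ where $A_c$ is zero except for entries $-T^s$ at $(i,i^+)$, $T^s-1$ at $(i,j^+)$, $-1$ at $(j,j^+)$,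 and $A_{\mathrm{nv}}$ is zero except for $-1$ at $(j,k)$. Let $G=(g_{\alpha\beta})=A^{-1}$ over $\mathbb{Q}(T)$. Let $T_3=T_1T_2$ and let $g_{\nu\alpha\beta}$ be $g_{\alpha\beta}$ with $T\to T_\nu$ ($\nu=1,2,3$). For crossings $c=(s,i,j)$, $c_0=(s_0,i_0,j_0)$, $c_1=(s_1,i_1,j_1)$ and an edge $k$: $$F_1(c)= s\Big[\tfrac12 - g_{3ii} + T_2^s g_{1ii}g_{2ji} - T_2^s g_{3jj}g_{2ji} - (T_2^s-1)g_{3ii}g_{2ji} + (T_3^s-1)g_{2ji}g_{3ji} - g_{1ii}g_{2jj} + 2g_{3ii}g_{2jj} + g_{1ii}g_{3jj} - g_{2ii}g_{3jj}\Big]$$ $$\quad + \frac{s}{T_2^s-1}\Big[(T_1^s-1)T_2^s\big(g_{3jj}g_{1ji}-g_{2jj}g_{1ji}+T_2^sg_{1ji}g_{2ji}\big) + (T_3^s-1)g_{3ji}\big(1-T_2^sg_{1ii}+g_{2ij}+(T_2^s-2)g_{2jj}-(T_1^s-1)(T_2^s+1)g_{1ji}\big)\Big],$$ $$F_2(c_0,c_1)=\frac{s_1(T_1^{s_0}-1)(T_3^{s_1}-1)g_{1j_1i_0}g_{3j_0i_1}}{T_2^{s_1}-1}\Big(T_2^{s_0}g_{2i_1i_0}+g_{2j_1j_0}-T_2^{s_0}g_{2j_1i_0}-g_{2i_1j_0}\Big),\qquad F_3(k)=(g_{3kk}-\tfrac12)\varphi_k,$$ and $\theta_0(D)=\sum_{c\in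 X}F_1(c)+\sum_{c_0,c_1\in X}F_2(c_0,c_1)+\sum_{\text{edges }k}F_3(k)$ (ordered pairs, including $c_0=c_1$; null vertices contribute no terms of their own). *)

theory Defs
  imports Complex_Main
begin

text \<open>
  A diagram is described by the list  es  of its (distinct) edge labels in order along
  the knot, a set  X  of crossings  (s,i,j)  (sign s, incoming over-edge i, incoming
  under-edge j), a set  N  of null vertices  (j,k), and rotation numbers  phi.
  The edge following  l  along the knot is  nxt es l  (the paper's  l^+).
\<close>

type_synonym 'e crossing = "int \<times> 'e \<times> 'e"

definition nxt :: "'e list \<Rightarrow> 'e \<Rightarrow> 'e" where
  "nxt es l = es ! Suc (THE n. n < length es \<and> es ! n = l)"

definition long_knot_diagram :: "'e list \<Rightarrow> 'e crossing set \<Rightarrow> ('e \<times> 'e) set \<Rightarrow> bool" where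
  "long_knot_diagram es X N \<longleftrightarrow>
     es \<noteq> [] \<and> distinct es \<and> finite X \<and> finite N \<and>
     (\<forall>(s,i,j)\<in>X. (s = 1 \<or> s = -1) \<and> i \<in> set es \<and> j \<in> set es) \<and>
     (\<forall>(j,k)\<in>N. j \<in> set es \<and> k = nxt es j) \<and>
     (\<forall>e\<in>set es.
        card {c\<in>X. fst (snd c) = e} + card {c\<in>X. snd (snd c) = e} + card {v\<in>N. fst v = e}
        = (if e = last es then 0 else 1))"

definition A_cross :: "'e list \<Rightarrow> 'a::field \<Rightarrow> 'e crossing \<Rightarrow> 'e \<Rightarrow> 'e \<Rightarrow> 'a" where
  "A_cross es T c a b = (case c of (s,i,j) \<Rightarrow>
      (if a = i \<and> b = nxt es i then - (T powi s) else 0)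
    + (if a = i \<and> b = nxt es j then T powi s - 1 else 0)
    + (if a = j \<and> b = nxt es j then -1 else 0))"

definition A_nv :: "'e \<times> 'e \<Rightarrow> 'e \<Rightarrow> 'e \<Rightarrow> 'a::field" where
  "A_nv v a b = (if a = fst v \<and> b = snd v then -1 else 0)"

definition Amat :: "'e list \<Rightarrow> 'e crossing set \<Rightarrow> ('e \<times> 'e) set \<Rightarrow> 'a::field \<Rightarrow> 'e \<Rightarrow> 'e \<Rightarrow> 'a" where
  "Amat es X N T a b =
     (if a = b then 1 else 0) + (\<Sum>c\<in>X. A_cross es T c a b) + (\<Sum>v\<in>N. A_nv v a b)"

definition is_inverse_on :: "'e set \<Rightarrow> ('e \<Rightarrow> 'e \<Rightarrow> 'a::field) \<Rightarrow> ('e \<Rightarrow> 'e \<Rightarrow> 'a) \<Rightarrow> bool" where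
  "is_inverse_on E M G \<longleftrightarrow>
     (\<forall>a\<in>E. \<forall>b\<in>E. (\<Sum>c\<in>E. M a c * G c b) = (if a = b then 1 else 0)) \<and>
     (\<forall>a\<in>E. \<forall>b\<in>E. (\<Sum>c\<in>E. G a c * M c b) = (if a = b then 1 else 0))"

definition invertible_on :: "'e set \<Rightarrow> ('e \<Rightarrow> 'e \<Rightarrow> 'a::field) \<Rightarrow> bool" where
  "invertible_on E M \<longleftrightarrow> (\<exists>G. is_inverse_on E M G)"

definition inv_on :: "'e set \<Rightarrow> ('e \<Rightarrow> 'e \<Rightarrow> 'a::field) \<Rightarrow> 'e \<Rightarrow> 'e \<Rightarrow> 'a" where
  "inv_on E M = (SOME G. is_inverse_on E M G)"

definition Gmat :: "'e list \<Rightarrow> 'e crossing set \<Rightarrow> ('e \<times> 'e) set \<Rightarrow> 'a::field \<Rightarrow> 'e \<Rightarrow> 'e \<Rightarrow> 'a" where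
  "Gmat es X N T = inv_on (set es) (Amat es X N T)"

definition F1 :: "('e \<Rightarrow> 'e \<Rightarrow> 'a::field) \<Rightarrow> ('e \<Rightarrow> 'e \<Rightarrow> 'a) \<Rightarrow> ('e \<Rightarrow> 'e \<Rightarrow> 'a)
                  \<Rightarrow> 'a \<Rightarrow> 'a \<Rightarrow> 'e crossing \<Rightarrow> 'a" where
  "F1 g1 g2 g3 T1 T2 c = (case c of (s,i,j) \<Rightarrow>
     let T3 = T1 * T2; S1 = T1 powi s; S2 = T2 powi s; S3 = T3 powi s in
     of_int s * (1/2 - g3 i i + S2 * g1 i i * g2 j i - S2 * g3 j j * g2 j i
        - (S2 - 1) * g3 i i * g2 j i + (S3 - 1) * g2 j i * g3 j i - g1 i i * g2 j j
        + 2 * g3 i i * g2 j j + g1 i i * g3 j j - g2 i i * g3 j j)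
     + of_int s / (S2 - 1) *
       ((S1 - 1) * S2 * (g3 j j * g1 j i - g2 j j * g1 j i + S2 * g1 j i * g2 j i)
        + (S3 - 1) * g3 j i * (1 - S2 * g1 i i + g2 i j + (S2 - 2) * g2 j j
                                - (S1 - 1) * (S2 + 1) * g1 j i)))"

definition F2 :: "('e \<Rightarrow> 'e \<Rightarrow> 'a::field) \<Rightarrow> ('e \<Rightarrow> 'e \<Rightarrow> 'a) \<Rightarrow> ('e \<Rightarrow> 'e \<Rightarrow> 'a)
                  \<Rightarrow> 'a \<Rightarrow> 'a \<Rightarrow> 'e crossing \<Rightarrow> 'e crossing \<Rightarrow> 'a" where
  "F2 g1 g2 g3 T1 T2 c0 c1 = (case c0 of (s0,i0,j0) \<Rightarrow> case c1 of (s1,i1,j1) \<Rightarrow>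
     let T3 = T1 * T2 in
     of_int s1 * (T1 powi s0 - 1) * (T3 powi s1 - 1) * g1 j1 i0 * g3 j0 i1 / (T2 powi s1 - 1)
     * (T2 powi s0 * g2 i1 i0 + g2 j1 j0 - T2 powi s0 * g2 j1 i0 - g2 i1 j0))"

definition F3 :: "('e \<Rightarrow> 'e \<Rightarrow> 'a::field) \<Rightarrow> ('e \<Rightarrow> int) \<Rightarrow> 'e \<Rightarrow> 'a" where
  "F3 g3 phi k = (g3 k k - 1/2) * of_int (phi k)"

definition theta0 :: "'e list \<Rightarrow> 'e crossing set \<Rightarrow> ('e \<times> 'e) set \<Rightarrow> ('e \<Rightarrow> int)
                       \<Rightarrow> 'a::field \<Rightarrow> 'a \<Rightarrow> 'a" where
  "theta0 es X N phi T1 T2 =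
     (let g1 = Gmat es X N T1; g2 = Gmat es X N T2; g3 = Gmat es X N (T1 * T2) in
      (\<Sum>c\<in>X. F1 g1 g2 g3 T1 T2 c)
      + (\<Sum>c0\<in>X. \<Sum>c1\<in>X. F2 g1 g2 g3 T1 T2 c0 c1)
      + (\<Sum>k\<in>set es. F3 g3 phi k))"

end

theory Submission
  imports Defs
begin

(* Let G^l and G^r be the inverses of the matrices A of the two diagrams. Off the inner edges
   i^+, j^+, k^+ their entries coincide: a column of G^l, re-solved on the inner edges by the
   rows j, k, i^+ of the right diagram, satisfies all equations A^r y = e_b. Inside the disk the
   relations A G = G A = I at the three crossings express every entry of G needed by theta_0
   through entries in rows i^{++}, j^{++}, k^{++} and columns i, j, k, which are shared by both
   sides. The terms of theta_0 away from the disk therefore agree one by one, the terms involving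
   a disk crossing agree by a polynomial identity in the shared entries, and the rotation terms
   of the inner edges vanish. *)

lemma edge_index:
  assumes "distinct es" "e \<in> set es" "e \<noteq> last es"
  obtains n where "Suc n < length es" "es ! n = e" "nxt es e = es ! Suc n"
proof -
  obtain n where n: "n < length es" "es ! n = e"
    using assms(2) by (auto simp: in_set_conv_nth)
  have "Suc n < length es"
    using n assms(3) by (metis Suc_lessI diff_Suc_1 last_conv_nth length_greater_0_conv list.size(3) not_less0)
  moreover have "(THE m. m < length es \<and> es ! m = e) = n"
    using n assms(1) by (auto simp: nth_eq_iff_index_eq)
  ultimately show thesis
    using that n by (simp add: nxt_def)
qed

lemma nxt_in_set: "distinct es \<Longrightarrow> e \<in> set es \<Longrightarrow> e \<noteq> last es \<Longrightarrow> nxt es e \<in> set es"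
  by (metis edge_index nth_mem)

lemma nxt_inject:
  assumes "distinct es" "a \<in> set es" "a \<noteq> last es" "b \<in> set es" "b \<noteq> last es"
  shows "nxt es a = nxt es b \<longleftrightarrow> a = b"
  using assms by (metis edge_index Suc_inject nth_eq_iff_index_eq)

lemma nxt_neq_self: "distinct es \<Longrightarrow> e \<in> set es \<Longrightarrow> e \<noteq> last es \<Longrightarrow> nxt es e \<noteq> e"
  by (metis edge_index Suc_lessD n_not_Suc_n nth_eq_iff_index_eq)

abbreviation over_edge :: "'e crossing \<Rightarrow> 'e" where
  "over_edge c \<equiv> fst (snd c)"

abbreviation under_edge :: "'e crossing \<Rightarrow> 'e" where
  "under_edge c \<equiv> snd (snd c)"

definition edge_events ::
  "'e crossing set \<Rightarrow> ('e \<times> 'e) set \<Rightarrow> 'e \<Rightarrow> ('e crossing + 'e crossing + 'e \<times> 'e) set" where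
  "edge_events Y N e = {c\<in>Y. over_edge c = e} <+> {c\<in>Y. under_edge c = e} <+> {v\<in>N. fst v = e}"

lemma edge_events_iff [simp]:
  "Inl c \<in> edge_events Y N e \<longleftrightarrow> c \<in> Y \<and> over_edge c = e"
  "Inr (Inl c) \<in> edge_events Y N e \<longleftrightarrow> c \<in> Y \<and> under_edge c = e"
  "Inr (Inr v) \<in> edge_events Y N e \<longleftrightarrow> v \<in> N \<and> fst v = e"
  by (auto simp: edge_events_def Plus_def)

lemma card_edge_events:
  assumes "long_knot_diagram es Y N" "e \<in> set es"
  shows "card (edge_events Y N e) = (if e = last es then 0 else 1)"
proof -
  have "finite Y" "finite N"
    using assms(1) by (simp_all add: long_knot_diagram_def)
  then show ?thesis
    using assms unfolding long_knot_diagram_def edge_events_def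
    by (simp add: card_Plus add.assoc del: card_0_eq)
qed

lemma edge_events_subsingleton:
  assumes wf: "long_knot_diagram es Y N"
    and u: "u \<in> edge_events Y N e" and w: "w \<in> edge_events Y N e"
  shows "u = w"
proof -
  have "e \<in> set es"
    using u wf by (auto simp: edge_events_def long_knot_diagram_def)
  then have "card (edge_events Y N e) \<le> 1"
    using card_edge_events[OF wf] by simp
  moreover have "finite (edge_events Y N e)"
    using wf by (simp add: long_knot_diagram_def edge_events_def)
  ultimately show ?thesis
    using u w by (auto simp: card_le_Suc0_iff_eq)
qed

lemma edge_events_last_empty:
  assumes wf: "long_knot_diagram es Y N"
  shows "edge_events Y N (last es) = {}"
proof -
  have "last es \<in> set es"
    using wf by (simp add: long_knot_diagram_def)
  moreover have "finite (edge_events Y N (last es))"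
    using wf by (simp add: long_knot_diagram_def edge_events_def)
  ultimately show ?thesis
    using card_edge_events[OF wf] by (metis card_0_eq)
qed

lemma crossing_edges:
  assumes wf: "long_knot_diagram es Y N" and x: "x \<in> Y"
  shows "over_edge x \<in> set es" "under_edge x \<in> set es"
    and "over_edge x \<noteq> last es" "under_edge x \<noteq> last es"
    and "over_edge x \<noteq> under_edge x"
proof -
  show "over_edge x \<in> set es" "under_edge x \<in> set es"
    using wf x by (auto simp: long_knot_diagram_def)
  have over: "Inl x \<in> edge_events Y N (over_edge x)"
    and under: "Inr (Inl x) \<in> edge_events Y N (under_edge x)"
    using x by simp_all
  then show "over_edge x \<noteq> last es" "under_edge x \<noteq> last es"
    using edge_events_last_empty[OF wf] by force+
  show "over_edge x \<noteq> under_edge x"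
  proof
    assume "over_edge x = under_edge x"
    then have "Inr (Inl x) \<in> edge_events Y N (over_edge x)"
      using under by simp
    then show False
      using edge_events_subsingleton[OF wf over] by blast
  qed
qed

lemma crossing_event:
  assumes "x \<in> Y" "a \<in> {over_edge x, under_edge x}"
  obtains u where "u \<in> edge_events Y N a" "u \<in> {Inl x, Inr (Inl x)}"
proof (cases "a = over_edge x")
  case True
  then show thesis
    using that[of "Inl x"] assms(1) by simp
next
  case False
  then show thesis
    using that[of "Inr (Inl x)"] assms by simp
qed

lemma crossing_at_edge_unique:
  assumes wf: "long_knot_diagram es Y N" and x: "x \<in> Y" and y: "y \<in> Y"
    and "a \<in> {over_edge x, under_edge x}" "a \<in> {over_edge y, under_edge y}"
  shows "y = x"
proof -
  obtain u where u: "u \<in> edge_events Y N a" "u \<in> {Inl x, Inr (Inl x)}"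
    using crossing_event[OF x assms(4)] .
  obtain w where w: "w \<in> edge_events Y N a" "w \<in> {Inl y, Inr (Inl y)}"
    using crossing_event[OF y assms(5)] .
  show ?thesis
    using edge_events_subsingleton[OF wf u(1) w(1)] u(2) w(2) by auto
qed

lemma over_neq_under:
  assumes wf: "long_knot_diagram es Y N" and "x \<in> Y" "y \<in> Y"
  shows "over_edge x \<noteq> under_edge y"
  using crossing_at_edge_unique[OF wf assms(2,3), of "over_edge x"] crossing_edges(5)[OF wf assms(2)]
  by auto

lemma null_vertex_edges:
  assumes wf: "long_knot_diagram es Y N" and v: "v \<in> N"
  shows "fst v \<in> set es" "fst v \<noteq> last es" "snd v = nxt es (fst v)"
proof -
  show "fst v \<in> set es" "snd v = nxt es (fst v)"
    using wf v by (auto simp: long_knot_diagram_def)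
  have "Inr (Inr v) \<in> edge_events Y N (fst v)"
    using v by simp
  then show "fst v \<noteq> last es"
    using edge_events_last_empty[OF wf] by force
qed

lemma null_vertex_not_at_crossing:
  assumes wf: "long_knot_diagram es Y N" and x: "x \<in> Y" and v: "v \<in> N"
  shows "fst v \<notin> {over_edge x, under_edge x}"
proof
  assume "fst v \<in> {over_edge x, under_edge x}"
  then obtain u where "u \<in> edge_events Y N (fst v)" "u \<in> {Inl x, Inr (Inl x)}"
    using crossing_event[OF x] by blast
  moreover have "Inr (Inr v) \<in> edge_events Y N (fst v)"
    using v by simp
  ultimately show False
    using edge_events_subsingleton[OF wf] by blast
qed

lemma A_cross_eq_0:
  assumes "a \<notin> {over_edge c, under_edge c} \<or> b \<notin> {nxt es (over_edge c), nxt es (under_edge c)}"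
  shows "A_cross es T c a b = 0"
  using assms by (auto simp: A_cross_def split: prod.split)

lemma Amat_row_at_crossing:
  assumes wf: "long_knot_diagram es Y N" and x: "x \<in> Y" and a: "a \<in> {over_edge x, under_edge x}"
  shows "Amat es Y N T a b = (if a = b then 1 else 0) + A_cross es T x a b"
proof -
  have "(\<Sum>c\<in>Y. A_cross es T c a b) = A_cross es T x a b"
  proof (subst sum.mono_neutral_left[of Y "{x}", symmetric])
    show "\<forall>y\<in>Y - {x}. A_cross es T y a b = 0"
      using crossing_at_edge_unique[OF wf x _ a] by (blast intro: A_cross_eq_0)
  qed (use wf x in \<open>auto simp: long_knot_diagram_def\<close>)
  moreover have "(\<Sum>v\<in>N. A_nv v a b) = 0"
  proof (intro sum.neutral ballI)
    fix v assume "v \<in> N"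
    then have "fst v \<noteq> a"
      using null_vertex_not_at_crossing[OF wf x] a by blast
    then show "A_nv v a b = 0"
      by (simp add: A_nv_def)
  qed
  ultimately show ?thesis
    by (simp add: Amat_def)
qed

lemma Amat_col_at_crossing:
  assumes wf: "long_knot_diagram es Y N" and x: "x \<in> Y" and a: "a \<in> {over_edge x, under_edge x}"
  shows "Amat es Y N T b (nxt es a) = (if b = nxt es a then 1 else 0) + A_cross es T x b (nxt es a)"
proof -
  have d: "distinct es"
    using wf by (simp add: long_knot_diagram_def)
  have "a \<in> set es" "a \<noteq> last es"
    using crossing_edges[OF wf x] a by auto
  note nxt_eq = nxt_inject[OF d _ _ this]
  have "(\<Sum>c\<in>Y. A_cross es T c b (nxt es a)) = A_cross es T x b (nxt es a)"
  proof (subst sum.mono_neutral_left[of Y "{x}", symmetric])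
    show "\<forall>y\<in>Y - {x}. A_cross es T y b (nxt es a) = 0"
    proof
      fix y assume y: "y \<in> Y - {x}"
      then have "over_edge y \<noteq> a" "under_edge y \<noteq> a"
        using crossing_at_edge_unique[OF wf x _ a] by blast+
      then have "nxt es a \<notin> {nxt es (over_edge y), nxt es (under_edge y)}"
        using nxt_eq[of "over_edge y"] nxt_eq[of "under_edge y"] crossing_edges[OF wf] y by auto
      then show "A_cross es T y b (nxt es a) = 0"
        by (intro A_cross_eq_0) blast
    qed
  qed (use wf x in \<open>auto simp: long_knot_diagram_def\<close>)
  moreover have "(\<Sum>v\<in>N. A_nv v b (nxt es a)) = 0"
  proof (intro sum.neutral ballI)
    fix v assume v: "v \<in> N"
    have "fst v \<noteq> a"
      using null_vertex_not_at_crossing[OF wf x v] a by blast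
    then have "snd v \<noteq> nxt es a"
      using null_vertex_edges[OF wf v] nxt_eq[of "fst v"] by simp
    then show "A_nv v b (nxt es a) = 0"
      by (simp add: A_nv_def)
  qed
  ultimately show ?thesis
    by (simp add: Amat_def)
qed

lemma Amat_crossing_sums:
  assumes wf: "long_knot_diagram es Y N" and x: "(s, p, q) \<in> Y"
  shows "(\<Sum>c\<in>set es. Amat es Y N T p c * y c)
         = y p - T powi s * y (nxt es p) + (T powi s - 1) * y (nxt es q)"
    and "(\<Sum>c\<in>set es. Amat es Y N T q c * y c) = y q - y (nxt es q)"
    and "(\<Sum>c\<in>set es. y c * Amat es Y N T c (nxt es p)) = y (nxt es p) - T powi s * y p"
    and "(\<Sum>c\<in>set es. y c * Amat es Y N T c (nxt es q))
         = y (nxt es q) + (T powi s - 1) * y p - y q"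
proof -
  have d: "distinct es"
    using wf by (simp add: long_knot_diagram_def)
  note e = crossing_edges[OF wf x, simplified]
  have n: "nxt es p \<in> set es" "nxt es q \<in> set es" "nxt es p \<noteq> nxt es q"
    using e nxt_in_set[OF d] nxt_inject[OF d] by auto
  note sum_simps = A_cross_def ring_distribs sum.distrib sum_subtractf
    if_distrib[of "\<lambda>z. z * _"] if_distrib[of "\<lambda>z. _ * z"]
  show "(\<Sum>c\<in>set es. Amat es Y N T p c * y c)
         = y p - T powi s * y (nxt es p) + (T powi s - 1) * y (nxt es q)"
    using e n by (simp add: Amat_row_at_crossing[OF wf x] sum_simps cong: if_cong)
  show "(\<Sum>c\<in>set es. Amat es Y N T q c * y c) = y q - y (nxt es q)"
    using e n by (simp add: Amat_row_at_crossing[OF wf x] sum_simps cong: if_cong)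
  show "(\<Sum>c\<in>set es. y c * Amat es Y N T c (nxt es p)) = y (nxt es p) - T powi s * y p"
    using e n by (simp add: Amat_col_at_crossing[OF wf x] sum_simps cong: if_cong)
  show "(\<Sum>c\<in>set es. y c * Amat es Y N T c (nxt es q))
         = y (nxt es q) + (T powi s - 1) * y p - y q"
    using e n by (simp add: Amat_col_at_crossing[OF wf x] sum_simps cong: if_cong)
qed

lemma Amat_union_row:
  assumes "finite X" "finite L" "\<forall>c\<in>L. a \<notin> {over_edge c, under_edge c}"
  shows "Amat es (X \<union> L) N T a b = Amat es X N T a b"
proof -
  have "(\<Sum>c\<in>X \<union> L. A_cross es T c a b) = (\<Sum>c\<in>X. A_cross es T c a b)"
    using assms by (intro sum.mono_neutral_left[symmetric]) (auto intro: A_cross_eq_0)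
  then show ?thesis
    by (simp add: Amat_def)
qed

lemma is_inverse_on_inv_on: "invertible_on E M \<Longrightarrow> is_inverse_on E M (inv_on E M)"
  unfolding invertible_on_def inv_on_def by (erule someI_ex)

lemma is_inverse_on_solution:
  assumes G: "is_inverse_on E M G" and "finite E" "\<alpha> \<in> E" "\<beta> \<in> E"
    and y: "\<And>a. a \<in> E \<Longrightarrow> (\<Sum>c\<in>E. M a c * y c) = (if a = \<beta> then 1 else 0)"
  shows "G \<alpha> \<beta> = y \<alpha>"
proof -
  have "G \<alpha> \<beta> = (\<Sum>a\<in>E. G \<alpha> a * (\<Sum>c\<in>E. M a c * y c))"
    using assms by (simp add: if_distrib[of "\<lambda>z. _ * z"] cong: if_cong)
  also have "\<dots> = (\<Sum>a\<in>E. \<Sum>c\<in>E. G \<alpha> a * M a c * y c)"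
    by (simp add: sum_distrib_left mult.assoc)
  also have "\<dots> = (\<Sum>c\<in>E. \<Sum>a\<in>E. G \<alpha> a * M a c * y c)"
    by (rule sum.swap)
  also have "\<dots> = (\<Sum>c\<in>E. (\<Sum>a\<in>E. G \<alpha> a * M a c) * y c)"
    by (simp add: sum_distrib_right)
  also have "\<dots> = y \<alpha>"
    using G assms(2,3) by (simp add: is_inverse_on_def if_distrib[of "\<lambda>z. z * _"] cong: if_cong)
  finally show ?thesis .
qed

lemma is_inverse_on_crossing:
  assumes wf: "long_knot_diagram es Y N" and x: "(s, p, q) \<in> Y"
    and G: "is_inverse_on (set es) (Amat es Y N T) G"
  shows "b \<in> set es \<Longrightarrow>
           G p b = T powi s * G (nxt es p) b - (T powi s - 1) * G (nxt es q) b + (if p = b then 1 else 0)"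
    and "b \<in> set es \<Longrightarrow> G q b = G (nxt es q) b + (if q = b then 1 else 0)"
    and "a \<in> set es \<Longrightarrow> G a (nxt es p) = T powi s * G a p + (if a = nxt es p then 1 else 0)"
    and "a \<in> set es \<Longrightarrow>
           G a (nxt es q) = G a q - (T powi s - 1) * G a p + (if a = nxt es q then 1 else 0)"
proof -
  have d: "distinct es"
    using wf by (simp add: long_knot_diagram_def)
  note e = crossing_edges[OF wf x, simplified]
  have n: "nxt es p \<in> set es" "nxt es q \<in> set es"
    using e nxt_in_set[OF d] by auto
  note rows = G[unfolded is_inverse_on_def, THEN conjunct1, rule_format]
  note cols = G[unfolded is_inverse_on_def, THEN conjunct2, rule_format]
  note sums = Amat_crossing_sums[OF wf x]
  show "G p b = T powi s * G (nxt es p) b - (T powi s - 1) * G (nxt es q) b + (if p = b then 1 else 0)"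
    if "b \<in> set es"
    using sums(1)[of T "\<lambda>c. G c b"] rows[OF e(1) that] by (simp add: algebra_simps)
  show "G q b = G (nxt es q) b + (if q = b then 1 else 0)" if "b \<in> set es"
    using sums(2)[of T "\<lambda>c. G c b"] rows[OF e(2) that] by (simp add: algebra_simps)
  show "G a (nxt es p) = T powi s * G a p + (if a = nxt es p then 1 else 0)" if "a \<in> set es"
    using sums(3)[of "\<lambda>c. G a c" T] cols[OF that n(1)] by (simp add: algebra_simps)
  show "G a (nxt es q) = G a q - (T powi s - 1) * G a p + (if a = nxt es q then 1 else 0)"
    if "a \<in> set es"
    using sums(4)[of "\<lambda>c. G a c" T] cols[OF that n(2)] by (simp add: algebra_simps)
qed

lemma F1_cong:
  assumes "p \<in> E" "q \<in> E"
    and "\<And>a b. a \<in> E \<Longrightarrow> b \<in> E \<Longrightarrow> g1 a b = g1' a b \<and> g2 a b = g2' a b \<and> g3 a b = g3' a b"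
  shows "F1 g1 g2 g3 T1 T2 (s, p, q) = F1 g1' g2' g3' T1 T2 (s, p, q)"
  using assms by (simp add: F1_def)

lemma F2_cong:
  assumes "p \<in> E" "q \<in> E" "p' \<in> E" "q' \<in> E"
    and "\<And>a b. a \<in> E \<Longrightarrow> b \<in> E \<Longrightarrow> g1 a b = g1' a b \<and> g2 a b = g2' a b \<and> g3 a b = g3' a b"
  shows "F2 g1 g2 g3 T1 T2 (s, p, q) (s', p', q') = F2 g1' g2' g3' T1 T2 (s, p, q) (s', p', q')"
  using assms by (simp add: F2_def)

lemma sums_union_disjoint:
  fixes f :: "'c \<Rightarrow> 'a::comm_monoid_add"
  assumes "finite X" "finite L" "X \<inter> L = {}"
  shows "(\<Sum>c\<in>X \<union> L. f c) + (\<Sum>c0\<in>X \<union> L. \<Sum>c1\<in>X \<union> L. h c0 c1)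
       = (\<Sum>c\<in>X. f c) + (\<Sum>c0\<in>X. \<Sum>c1\<in>X. h c0 c1)
         + (\<Sum>c\<in>X. (\<Sum>c1\<in>L. h c c1) + (\<Sum>c0\<in>L. h c0 c))
         + ((\<Sum>c\<in>L. f c) + (\<Sum>c0\<in>L. \<Sum>c1\<in>L. h c0 c1))"
proof -
  have union: "(\<Sum>c\<in>X \<union> L. g c) = (\<Sum>c\<in>X. g c) + (\<Sum>c\<in>L. g c)" for g :: "'c \<Rightarrow> 'a"
    using assms by (intro sum.union_disjoint) auto
  have "(\<Sum>c0\<in>L. \<Sum>c1\<in>X. h c0 c1) = (\<Sum>c1\<in>X. \<Sum>c0\<in>L. h c0 c1)"
    by (rule sum.swap)
  then show ?thesis
    unfolding union sum.distrib by (simp add: ac_simps)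
qed

locale r3_move =
  fixes es :: "'e list" and X :: "'e crossing set" and N :: "('e \<times> 'e) set" and i j k :: 'e
  assumes wf_left: "long_knot_diagram es (X \<union> {(1, j, k), (1, i, nxt es k), (1, nxt es i, nxt es j)}) N"
    and wf_right: "long_knot_diagram es (X \<union> {(1, i, j), (1, nxt es i, k), (1, nxt es j, nxt es k)}) N"
begin

abbreviation "i1 \<equiv> nxt es i"
abbreviation "j1 \<equiv> nxt es j"
abbreviation "k1 \<equiv> nxt es k"
abbreviation "i2 \<equiv> nxt es i1"
abbreviation "j2 \<equiv> nxt es j1"
abbreviation "k2 \<equiv> nxt es k1"

abbreviation "Cl \<equiv> {(1::int, j, k), (1, i, k1), (1, i1, j1)}"
abbreviation "Cr \<equiv> {(1::int, i, j), (1, i1, k), (1, j1, k1)}"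
abbreviation "Xl \<equiv> X \<union> Cl"
abbreviation "Xr \<equiv> X \<union> Cr"

abbreviation "disk_edges \<equiv> {i, i1, j, j1, k, k1}"
abbreviation "inner_edges \<equiv> {i1, j1, k1}"

lemma finite_X: "finite X"
  using wf_left by (simp add: long_knot_diagram_def)

lemma distinct_es: "distinct es"
  using wf_left by (simp add: long_knot_diagram_def)

lemma disk_edges_in_set: "i \<in> set es" "j \<in> set es" "k \<in> set es" "i1 \<in> set es" "j1 \<in> set es" "k1 \<in> set es"
  using crossing_edges(1,2)[OF wf_left, of "(1, j, k)"] crossing_edges(1,2)[OF wf_left, of "(1, i, k1)"]
    crossing_edges(1,2)[OF wf_left, of "(1, i1, j1)"] by simp_all

lemma disk_edges_not_last:
  "i \<noteq> last es" "j \<noteq> last es" "k \<noteq> last es" "i1 \<noteq> last es" "j1 \<noteq> last es" "k1 \<noteq> last es"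
  using crossing_edges(3,4)[OF wf_left, of "(1, j, k)"] crossing_edges(3,4)[OF wf_left, of "(1, i, k1)"]
    crossing_edges(3,4)[OF wf_left, of "(1, i1, j1)"] by simp_all

(* Apart from (i, i1) and (k, k1), each pair consists of an over edge and an under edge of crossings
   of one of the two diagrams. *)
lemma disk_edges_neq:
  "i \<noteq> i1" "i \<noteq> j" "i \<noteq> j1" "i \<noteq> k" "i \<noteq> k1" "i1 \<noteq> j" "i1 \<noteq> j1" "i1 \<noteq> k" "i1 \<noteq> k1"
  "j \<noteq> j1" "j \<noteq> k" "j \<noteq> k1" "j1 \<noteq> k" "j1 \<noteq> k1" "k \<noteq> k1"
proof -
  have "\<forall>x\<in>Cl. \<forall>y\<in>Cl. over_edge x \<noteq> under_edge y" "\<forall>x\<in>Cr. \<forall>y\<in>Cr. over_edge x \<noteq> under_edge y"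
    using over_neq_under[OF wf_left] over_neq_under[OF wf_right] by blast+
  moreover have "i1 \<noteq> i" "k1 \<noteq> k"
    using nxt_neq_self[OF distinct_es] disk_edges_in_set disk_edges_not_last by auto
  ultimately show
    "i \<noteq> i1" "i \<noteq> j" "i \<noteq> j1" "i \<noteq> k" "i \<noteq> k1" "i1 \<noteq> j" "i1 \<noteq> j1" "i1 \<noteq> k" "i1 \<noteq> k1"
    "j \<noteq> j1" "j \<noteq> k" "j \<noteq> k1" "j1 \<noteq> k" "j1 \<noteq> k1" "k \<noteq> k1"
    by auto
qed

lemma exit_edges_in_set: "i2 \<in> set es" "j2 \<in> set es" "k2 \<in> set es"
  using disk_edges_in_set disk_edges_not_last by (simp_all add: nxt_in_set[OF distinct_es])

lemma exit_edges_neq: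
  "i2 \<noteq> i1" "i2 \<noteq> j1" "i2 \<noteq> k1" "j2 \<noteq> i1" "j2 \<noteq> j1" "j2 \<noteq> k1" "k2 \<noteq> i1" "k2 \<noteq> j1" "k2 \<noteq> k1"
  using disk_edges_neq disk_edges_in_set disk_edges_not_last
  by (simp_all add: nxt_inject[OF distinct_es] nxt_neq_self[OF distinct_es])

lemma X_avoids_disk:
  assumes x: "x \<in> X"
  shows "over_edge x \<notin> disk_edges" "under_edge x \<notin> disk_edges"
proof -
  have "x \<in> Cl \<and> x \<in> Cr" if a: "a \<in> {over_edge x, under_edge x}" "a \<in> disk_edges" for a
  proof -
    have "a \<in> (\<Union>c\<in>Cl. {over_edge c, under_edge c})" "a \<in> (\<Union>c\<in>Cr. {over_edge c, under_edge c})"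
      using a(2) by auto
    then obtain c c' where "c \<in> Cl" "a \<in> {over_edge c, under_edge c}"
      and "c' \<in> Cr" "a \<in> {over_edge c', under_edge c'}"
      by blast
    moreover have "x \<in> Xl" "x \<in> Xr"
      using x by simp_all
    ultimately have "c = x" "c' = x"
      using crossing_at_edge_unique[OF wf_left \<open>x \<in> Xl\<close> _ a(1)]
        crossing_at_edge_unique[OF wf_right \<open>x \<in> Xr\<close> _ a(1)] by blast+
    then show ?thesis
      using \<open>c \<in> Cl\<close> \<open>c' \<in> Cr\<close> by simp
  qed
  moreover have "Cl \<inter> Cr = {}"
    using disk_edges_neq by auto
  ultimately show "over_edge x \<notin> disk_edges" "under_edge x \<notin> disk_edges"
    by blast+
qed

lemma X_disjoint: "X \<inter> Cl = {}" "X \<inter> Cr = {}"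
proof -
  have "over_edge c \<in> disk_edges" if "c \<in> Cl \<union> Cr" for c
    using that by auto
  then show "X \<inter> Cl = {}" "X \<inter> Cr = {}"
    using X_avoids_disk(1) by blast+
qed

lemma rows_outside_disk_agree:
  assumes "a \<notin> disk_edges"
  shows "Amat es Xl N T a b = Amat es Xr N T a b"
  using assms Amat_union_row[OF finite_X, of Cl a es N T b] Amat_union_row[OF finite_X, of Cr a es N T b]
  by simp

lemma left_inner_cols_outside_disk:
  assumes a: "a \<notin> disk_edges" and c: "c \<in> inner_edges"
  shows "Amat es Xl N T a c = 0"
proof -
  have col: "Amat es Xl N T a (nxt es e) = 0"
    if "x \<in> Cl" "e \<in> {over_edge x, under_edge x}" "a \<noteq> nxt es e" for x e
  proof -
    have "x \<in> Xl"
      using that(1) by blast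
    then have "Amat es Xl N T a (nxt es e) = (if a = nxt es e then 1 else 0) + A_cross es T x a (nxt es e)"
      by (rule Amat_col_at_crossing[OF wf_left _ that(2)])
    moreover have "A_cross es T x a (nxt es e) = 0"
      using that(1) a by (intro A_cross_eq_0) auto
    ultimately show ?thesis
      using that(3) by simp
  qed
  show ?thesis
    using c a col[of "(1, i, k1)" i] col[of "(1, j, k)" j] col[of "(1, j, k)" k] by auto
qed

lemma left_inverse_rules:
  assumes G: "is_inverse_on (set es) (Amat es Xl N T) G"
  shows "b \<in> set es \<Longrightarrow> G j b = T * G j1 b - (T - 1) * G k1 b + (if j = b then 1 else 0)"
    and "b \<in> set es \<Longrightarrow> G k b = G k1 b + (if k = b then 1 else 0)"
    and "b \<in> set es \<Longrightarrow> G i b = T * G i1 b - (T - 1) * G k2 b + (if i = b then 1 else 0)"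
    and "b \<in> set es \<Longrightarrow> G k1 b = G k2 b + (if k1 = b then 1 else 0)"
    and "b \<in> set es \<Longrightarrow> G i1 b = T * G i2 b - (T - 1) * G j2 b + (if i1 = b then 1 else 0)"
    and "b \<in> set es \<Longrightarrow> G j1 b = G j2 b + (if j1 = b then 1 else 0)"
    and "a \<in> set es \<Longrightarrow> G a j1 = T * G a j + (if a = j1 then 1 else 0)"
    and "a \<in> set es \<Longrightarrow> G a k1 = G a k - (T - 1) * G a j + (if a = k1 then 1 else 0)"
    and "a \<in> set es \<Longrightarrow> G a i1 = T * G a i + (if a = i1 then 1 else 0)"
  using is_inverse_on_crossing[OF wf_left _ G, of 1 j k] is_inverse_on_crossing[OF wf_left _ G, of 1 i k1]
    is_inverse_on_crossing[OF wf_left _ G, of 1 i1 j1]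
  by simp_all

lemma right_inverse_rules:
  assumes G: "is_inverse_on (set es) (Amat es Xr N T) G"
  shows "b \<in> set es \<Longrightarrow> G i b = T * G i1 b - (T - 1) * G j1 b + (if i = b then 1 else 0)"
    and "b \<in> set es \<Longrightarrow> G j b = G j1 b + (if j = b then 1 else 0)"
    and "b \<in> set es \<Longrightarrow> G i1 b = T * G i2 b - (T - 1) * G k1 b + (if i1 = b then 1 else 0)"
    and "b \<in> set es \<Longrightarrow> G k b = G k1 b + (if k = b then 1 else 0)"
    and "b \<in> set es \<Longrightarrow> G j1 b = T * G j2 b - (T - 1) * G k2 b + (if j1 = b then 1 else 0)"
    and "b \<in> set es \<Longrightarrow> G k1 b = G k2 b + (if k1 = b then 1 else 0)"
    and "a \<in> set es \<Longrightarrow> G a i1 = T * G a i + (if a = i1 then 1 else 0)"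
    and "a \<in> set es \<Longrightarrow> G a j1 = G a j - (T - 1) * G a i + (if a = j1 then 1 else 0)"
    and "a \<in> set es \<Longrightarrow> G a k1 = G a k - (T - 1) * G a i1 + (if a = k1 then 1 else 0)"
  using is_inverse_on_crossing[OF wf_right _ G, of 1 i j] is_inverse_on_crossing[OF wf_right _ G, of 1 i1 k]
    is_inverse_on_crossing[OF wf_right _ G, of 1 j1 k1]
  by simp_all

(* Column b of G^l, re-solved on the inner edges from the rows j, k and i1 of A^r y = e_b. *)
definition corrected_column :: "('e \<Rightarrow> 'e \<Rightarrow> 'a::field) \<Rightarrow> 'a \<Rightarrow> 'e \<Rightarrow> 'e \<Rightarrow> 'a" where
  "corrected_column G T b c =
     (if c = j1 then G j b - (if j = b then 1 else 0)
      else if c = k1 then G k b - (if k = b then 1 else 0)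
      else if c = i1 then T * G i2 b - (T - 1) * (G k b - (if k = b then 1 else 0))
      else G c b)"

lemma corrected_column_disk_rows:
  assumes G: "is_inverse_on (set es) (Amat es Xl N T) G"
    and b: "b \<in> set es" "b \<notin> inner_edges" and a: "a \<in> disk_edges"
  shows "(\<Sum>c\<in>set es. Amat es Xr N T a c * corrected_column G T b c) = (if a = b then 1 else 0)"
proof -
  let ?y = "corrected_column G T b"
  have y: "?y j1 = G j b - (if j = b then 1 else 0)" "?y k1 = G k b - (if k = b then 1 else 0)"
    "?y i1 = T * G i2 b - (T - 1) * (G k b - (if k = b then 1 else 0))"
    "?y i = G i b" "?y j = G j b" "?y k = G k b" "?y i2 = G i2 b" "?y j2 = G j2 b" "?y k2 = G k2 b"
    using disk_edges_neq exit_edges_neq by (auto simp: corrected_column_def)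
  have b_not_inner: "i1 \<noteq> b" "j1 \<noteq> b" "k1 \<noteq> b"
    using b(2) by auto
  note rules = left_inverse_rules(1-6)[OF G b(1)]
  note sums = Amat_crossing_sums(1,2)[OF wf_right, where T = T and y = ?y]
  have "(1::int, i, j) \<in> Xr" "(1::int, i1, k) \<in> Xr" "(1::int, j1, k1) \<in> Xr"
    by simp_all
  note s1 = sums[OF this(1)] and s2 = sums[OF this(2)] and s3 = sums[OF this(3)]
  from a consider "a = i" | "a = i1" | "a = j" | "a = j1" | "a = k" | "a = k1"
    by blast
  then show ?thesis
  proof cases
    case 1
    show ?thesis unfolding 1 s1(1) y rules using b_not_inner by (simp add: algebra_simps)
  next
    case 2
    show ?thesis unfolding 2 s2(1) y rules using b_not_inner by (simp add: algebra_simps)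
  next
    case 3
    show ?thesis unfolding 3 s1(2) y rules using b_not_inner by (simp add: algebra_simps)
  next
    case 4
    show ?thesis unfolding 4 s3(1) y rules using b_not_inner by (simp add: algebra_simps)
  next
    case 5
    show ?thesis unfolding 5 s2(2) y rules using b_not_inner by (simp add: algebra_simps)
  next
    case 6
    show ?thesis unfolding 6 s3(2) y rules using b_not_inner by (simp add: algebra_simps)
  qed
qed

lemma corrected_column_outer_rows:
  assumes G: "is_inverse_on (set es) (Amat es Xl N T) G"
    and b: "b \<in> set es" and a: "a \<in> set es" "a \<notin> disk_edges"
  shows "(\<Sum>c\<in>set es. Amat es Xr N T a c * corrected_column G T b c) = (if a = b then 1 else 0)"
proof -
  have "Amat es Xr N T a c * corrected_column G T b c = Amat es Xl N T a c * G c b" for c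
  proof (cases "c \<in> inner_edges")
    case True
    then show ?thesis
      using left_inner_cols_outside_disk[OF a(2) True, where T = T]
        rows_outside_disk_agree[OF a(2), where T = T and b = c] by simp
  next
    case False
    then show ?thesis
      using rows_outside_disk_agree[OF a(2), where T = T and b = c] by (simp add: corrected_column_def)
  qed
  then show ?thesis
    using G a(1) b by (simp add: is_inverse_on_def)
qed

lemma inverses_agree_off_inner:
  assumes Gl: "is_inverse_on (set es) (Amat es Xl N T) Gl"
    and Gr: "is_inverse_on (set es) (Amat es Xr N T) Gr"
    and a: "a \<in> set es" "a \<notin> inner_edges" and b: "b \<in> set es" "b \<notin> inner_edges"
  shows "Gl a b = Gr a b"
proof -
  have "Gr a b = corrected_column Gl T b a"
  proof (rule is_inverse_on_solution[OF Gr finite_set a(1) b(1)])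
    fix c assume "c \<in> set es"
    then show "(\<Sum>d\<in>set es. Amat es Xr N T c d * corrected_column Gl T b d) = (if c = b then 1 else 0)"
      using corrected_column_disk_rows[OF Gl b] corrected_column_outer_rows[OF Gl b(1)] by blast
  qed
  then show ?thesis
    using a(2) by (simp add: corrected_column_def)
qed

end

locale r3_move_inverses = r3_move es X N i j k
  for es :: "'e list" and X N i j k +
  fixes T1 T2 :: "'a::field" and gl1 gl2 gl3 gr1 gr2 gr3 :: "'e \<Rightarrow> 'e \<Rightarrow> 'a"
  assumes T2_neq_1: "T2 \<noteq> 1"
    and inverse_left: "is_inverse_on (set es) (Amat es Xl N T1) gl1"
      "is_inverse_on (set es) (Amat es Xl N T2) gl2" "is_inverse_on (set es) (Amat es Xl N (T1 * T2)) gl3"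
    and inverse_right: "is_inverse_on (set es) (Amat es Xr N T1) gr1"
      "is_inverse_on (set es) (Amat es Xr N T2) gr2" "is_inverse_on (set es) (Amat es Xr N (T1 * T2)) gr3"
begin

lemma inverses_agree:
  assumes "a \<in> set es" "a \<notin> inner_edges" "b \<in> set es" "b \<notin> inner_edges"
  shows "gl1 a b = gr1 a b" "gl2 a b = gr2 a b" "gl3 a b = gr3 a b"
  using inverses_agree_off_inner[OF inverse_left(1) inverse_right(1) assms]
    inverses_agree_off_inner[OF inverse_left(2) inverse_right(2) assms]
    inverses_agree_off_inner[OF inverse_left(3) inverse_right(3) assms] by simp_all

lemmas inverse_rules =
  left_inverse_rules[OF inverse_left(1)] left_inverse_rules[OF inverse_left(2)]
  left_inverse_rules[OF inverse_left(3)] right_inverse_rules[OF inverse_right(1)]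
  right_inverse_rules[OF inverse_right(2)] right_inverse_rules[OF inverse_right(3)]

(* In the proofs below, inverse_rules move every row index in the disk forward to i2, j2, k2 and
   every inner column index back to i, j, k; the resulting entries are shared by both sides. *)
lemma disk_terms_eq:
  "(\<Sum>c\<in>Cl. F1 gl1 gl2 gl3 T1 T2 c) + (\<Sum>c0\<in>Cl. \<Sum>c1\<in>Cl. F2 gl1 gl2 gl3 T1 T2 c0 c1)
   = (\<Sum>c\<in>Cr. F1 gr1 gr2 gr3 T1 T2 c) + (\<Sum>c0\<in>Cr. \<Sum>c1\<in>Cr. F2 gr1 gr2 gr3 T1 T2 c0 c1)"
proof -
  have inv: "(T2 - 1) * inverse (T2 - 1) = 1"
    using T2_neq_1 by simp
  note neq = disk_edges_neq disk_edges_neq[THEN not_sym] exit_edges_neq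
  note mem = disk_edges_in_set exit_edges_in_set
  show ?thesis
    unfolding F1_def F2_def Let_def
    apply (simp add: inverse_rules mem neq)
    apply (simp add: inverses_agree mem neq divide_inverse)
    using inv by algebra
qed

lemma mixed_terms_eq:
  assumes c: "(s, p, q) \<in> X"
  shows "(\<Sum>c1\<in>Cl. F2 gl1 gl2 gl3 T1 T2 (s, p, q) c1) + (\<Sum>c0\<in>Cl. F2 gl1 gl2 gl3 T1 T2 c0 (s, p, q))
       = (\<Sum>c1\<in>Cr. F2 gr1 gr2 gr3 T1 T2 (s, p, q) c1) + (\<Sum>c0\<in>Cr. F2 gr1 gr2 gr3 T1 T2 c0 (s, p, q))"
proof -
  have pq: "p \<in> set es" "q \<in> set es" "p \<notin> disk_edges" "q \<notin> disk_edges"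
    using crossing_edges(1,2)[OF wf_left, of "(s, p, q)"] X_avoids_disk[OF c] c by auto
  have pq_neq: "p \<noteq> i" "p \<noteq> i1" "p \<noteq> j" "p \<noteq> j1" "p \<noteq> k" "p \<noteq> k1"
    "q \<noteq> i" "q \<noteq> i1" "q \<noteq> j" "q \<noteq> j1" "q \<noteq> k" "q \<noteq> k1"
    using pq(3,4) by auto
  note neq = disk_edges_neq disk_edges_neq[THEN not_sym] exit_edges_neq pq_neq pq_neq[THEN not_sym]
  note mem = disk_edges_in_set exit_edges_in_set pq(1,2)
  show ?thesis
    unfolding F2_def Let_def
    apply (simp add: inverse_rules mem neq)
    apply (simp add: inverses_agree mem neq divide_inverse)
    using T2_neq_1 by algebra
qed

lemma outer_terms_eq:
  "(\<Sum>c\<in>X. F1 gl1 gl2 gl3 T1 T2 c) = (\<Sum>c\<in>X. F1 gr1 gr2 gr3 T1 T2 c)"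
  "(\<Sum>c0\<in>X. \<Sum>c1\<in>X. F2 gl1 gl2 gl3 T1 T2 c0 c1) = (\<Sum>c0\<in>X. \<Sum>c1\<in>X. F2 gr1 gr2 gr3 T1 T2 c0 c1)"
proof -
  let ?E = "set es - inner_edges"
  have agree: "gl1 a b = gr1 a b \<and> gl2 a b = gr2 a b \<and> gl3 a b = gr3 a b" if "a \<in> ?E" "b \<in> ?E" for a b
    using inverses_agree that by blast
  have X_edges: "over_edge c \<in> ?E" "under_edge c \<in> ?E" if "c \<in> X" for c
    using crossing_edges(1,2)[OF wf_left, of c] X_avoids_disk[OF that] that by auto
  have "F1 gl1 gl2 gl3 T1 T2 c = F1 gr1 gr2 gr3 T1 T2 c" if "c \<in> X" for c
    using F1_cong[where s = "fst c", OF X_edges[OF that] agree] by simp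
  moreover have "F2 gl1 gl2 gl3 T1 T2 c0 c1 = F2 gr1 gr2 gr3 T1 T2 c0 c1" if "c0 \<in> X" "c1 \<in> X" for c0 c1
    using F2_cong[where s = "fst c0" and s' = "fst c1", OF X_edges[OF that(1)] X_edges[OF that(2)] agree]
    by simp
  ultimately show
    "(\<Sum>c\<in>X. F1 gl1 gl2 gl3 T1 T2 c) = (\<Sum>c\<in>X. F1 gr1 gr2 gr3 T1 T2 c)"
    "(\<Sum>c0\<in>X. \<Sum>c1\<in>X. F2 gl1 gl2 gl3 T1 T2 c0 c1) = (\<Sum>c0\<in>X. \<Sum>c1\<in>X. F2 gr1 gr2 gr3 T1 T2 c0 c1)"
    by (auto intro: sum.cong)
qed

lemma rotation_terms_eq:
  assumes rot: "phi i1 = 0" "phi j1 = 0" "phi k1 = 0"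
  shows "(\<Sum>e\<in>set es. F3 gl3 phi e) = (\<Sum>e\<in>set es. F3 gr3 phi e)"
proof (rule sum.cong[OF refl])
  fix e assume e: "e \<in> set es"
  show "F3 gl3 phi e = F3 gr3 phi e"
  proof (cases "e \<in> inner_edges")
    case True
    then show ?thesis
      using rot by (auto simp: F3_def)
  next
    case False
    then show ?thesis
      using inverses_agree(3)[OF e False e False] by (simp add: F3_def)
  qed
qed

lemma theta0_sums_eq:
  assumes rot: "phi i1 = 0" "phi j1 = 0" "phi k1 = 0"
  shows "(\<Sum>c\<in>Xl. F1 gl1 gl2 gl3 T1 T2 c) + (\<Sum>c0\<in>Xl. \<Sum>c1\<in>Xl. F2 gl1 gl2 gl3 T1 T2 c0 c1)
           + (\<Sum>e\<in>set es. F3 gl3 phi e)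
       = (\<Sum>c\<in>Xr. F1 gr1 gr2 gr3 T1 T2 c) + (\<Sum>c0\<in>Xr. \<Sum>c1\<in>Xr. F2 gr1 gr2 gr3 T1 T2 c0 c1)
           + (\<Sum>e\<in>set es. F3 gr3 phi e)"
proof -
  have "finite Cl" "finite Cr"
    by simp_all
  moreover have
    "(\<Sum>c\<in>X. (\<Sum>c1\<in>Cl. F2 gl1 gl2 gl3 T1 T2 c c1) + (\<Sum>c0\<in>Cl. F2 gl1 gl2 gl3 T1 T2 c0 c))
     = (\<Sum>c\<in>X. (\<Sum>c1\<in>Cr. F2 gr1 gr2 gr3 T1 T2 c c1) + (\<Sum>c0\<in>Cr. F2 gr1 gr2 gr3 T1 T2 c0 c))"
    using mixed_terms_eq by (intro sum.cong refl) auto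
  ultimately show ?thesis
    unfolding sums_union_disjoint[OF finite_X \<open>finite Cl\<close> X_disjoint(1)]
      sums_union_disjoint[OF finite_X \<open>finite Cr\<close> X_disjoint(2)]
      outer_terms_eq disk_terms_eq rotation_terms_eq[OF rot]
    by simp
qed

end

theorem mainTheorem4:
  fixes es :: "'e list" and X :: "'e crossing set" and N :: "('e \<times> 'e) set"
    and phi :: "'e \<Rightarrow> int" and i j k :: 'e and T1 T2 :: "'a::field_char_0"
  defines "Xl \<equiv> X \<union> {(1, j, k), (1, i, nxt es k), (1, nxt es i, nxt es j)}"
      and "Xr \<equiv> X \<union> {(1, i, j), (1, nxt es i, k), (1, nxt es j, nxt es k)}"
  assumes wfl: "long_knot_diagram es Xl N"
      and wfr: "long_knot_diagram es Xr N"
      and rot: "phi (nxt es i) = 0" "phi (nxt es j) = 0" "phi (nxt es k) = 0"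
      and T: "T1 \<noteq> 0" "T2 \<noteq> 0" "T2 \<noteq> 1"
      and invl: "invertible_on (set es) (Amat es Xl N T1)"
                "invertible_on (set es) (Amat es Xl N T2)"
                "invertible_on (set es) (Amat es Xl N (T1 * T2))"
      and invr: "invertible_on (set es) (Amat es Xr N T1)"
                "invertible_on (set es) (Amat es Xr N T2)"
                "invertible_on (set es) (Amat es Xr N (T1 * T2))"
  shows "theta0 es Xl N phi T1 T2 = theta0 es Xr N phi T1 T2"
proof -
  interpret r3_move_inverses es X N i j k T1 T2
    "Gmat es Xl N T1" "Gmat es Xl N T2" "Gmat es Xl N (T1 * T2)"
    "Gmat es Xr N T1" "Gmat es Xr N T2" "Gmat es Xr N (T1 * T2)"
    using wfl wfr T(3) invl invr unfolding Xl_def Xr_def Gmat_def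
    by unfold_locales (simp_all add: is_inverse_on_inv_on)
  show ?thesis
    using theta0_sums_eq[OF rot] unfolding theta0_def Let_def Xl_def Xr_def .
qed

end
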